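(* Let $d\ge1$ and $P\subseteq\mathbb R\times[d]$. The convexity space $(P,\mathcal C_{\equiv}(P))$ admits the colorful fractional Helly theorem for colorful $2$-tuples.
   Context: $[d]=\{1,\dots,d\}$. A (separated) $d$-interval is a set $I=\bigcup_{i\in[d]}\{(x,i): x\in I^{(i)}\}\subseteq\mathbb R\times[d]$ with each $I^{(i)}\subseteq\mathbb R$ convex (possibly empty). For $P\subseteq\mathbb R\times[d]$, $\mathcal C_{\equiv}(P)=\{I\cap P: I \text{ a } d\text{-interval}\}$. A convexity space $(X,\mathcal C)$ admits a colorful fractional Helly theorem for colorful $k$-tuples if there is a function $\beta:(0,1)\to(0,1)$ such that for all finite $\mathcal F_1,\dots,\mathcal F_k\subseteq\mathcal C$ of sizes $n_1,\dots,n_k$ with at least $\alpha n_1\cdots n_k$ colorful $k$-tuples $(C_1,\dots,C_k)\in\mathcal F_1\times\dots\times\mathcal F_k$ having nonempty intersection, some $\mathcal F_i$ contains a subfamily of size at least $\beta(\alpha)|\mathcal F_i|$ with nonempty intersection. *)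

theory Defs
  imports "HOL-Analysis.Analysis"
begin

definition d_interval :: "nat \<Rightarrow> (real \<times> nat) set \<Rightarrow> bool" where
  "d_interval d I \<longleftrightarrow>
     (\<exists>J :: nat \<Rightarrow> real set. (\<forall>i\<in>{1..d}. convex (J i)) \<and>
        I = {(x, i). i \<in> {1..d} \<and> x \<in> J i})"

definition C_equiv :: "nat \<Rightarrow> (real \<times> nat) set \<Rightarrow> (real \<times> nat) set set" where
  "C_equiv d P = {I \<inter> P | I. d_interval d I}"

text \<open>Colorful fractional Helly theorem for colorful k-tuples in the convexity space (X, C).
  Intersections are taken inside the ground set X (the empty intersection is X).\<close>
definition colorful_fractional_helly :: "'a set \<Rightarrow> 'a set set \<Rightarrow> nat \<Rightarrow> bool" where
  "colorful_fractional_helly X C k \<longleftrightarrow>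
     (\<exists>\<beta> :: real \<Rightarrow> real.
        (\<forall>\<alpha>. 0 < \<alpha> \<and> \<alpha> < 1 \<longrightarrow> 0 < \<beta> \<alpha> \<and> \<beta> \<alpha> < 1) \<and>
        (\<forall>\<alpha> (F :: nat \<Rightarrow> 'a set set).
           0 < \<alpha> \<and> \<alpha> < 1 \<and>
           (\<forall>i\<in>{1..k}. finite (F i) \<and> F i \<noteq> {} \<and> F i \<subseteq> C) \<and>
           real (card {f \<in> PiE {1..k} F. X \<inter> \<Inter>(f ` {1..k}) \<noteq> {}})
             \<ge> \<alpha> * (\<Prod>i\<in>{1..k}. real (card (F i)))
           \<longrightarrow> (\<exists>i\<in>{1..k}. \<exists>G \<subseteq> F i.
                  real (card G) \<ge> \<beta> \<alpha> * real (card (F i)) \<and> X \<inter> \<Inter>G \<noteq> {})))"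

end

theory Submission
  imports Defs
begin

(* Fix one witness point in P \<inter> A \<inter> B for every intersecting colorful pair (A, B), and let W be
   the finite set of witnesses. Every set A has at most d leftmost points of A \<inter> W, one per line.
   If A and B share a witness on line i, then the larger of the leftmost points of A and of B on that
   line lies in both sets, because traces of d-intervals are order-convex on each line. So every
   intersecting pair is charged to a leftmost point of one member that lies in the other member.
   If no point of P lay in a \<beta>-fraction of either family, there would be at most
   2 d \<beta> n\<^sub>1 n\<^sub>2 charges; for \<beta> = \<alpha> / (4 d) this is fewer than the \<alpha> n\<^sub>1 n\<^sub>2 intersecting pairs. *)

lemma C_equiv_subset: "A \<in> C_equiv d P \<Longrightarrow> A \<subseteq> P"
  unfolding C_equiv_def by auto

lemma C_equiv_line_convex:
  assumes "A \<in> C_equiv d P" "(a, i) \<in> A" "(b, i) \<in> A" "(x, i) \<in> P" "a \<le> x" "x \<le> b"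
  shows "(x, i) \<in> A"
proof -
  obtain I where A: "A = I \<inter> P" and "d_interval d I"
    using assms(1) unfolding C_equiv_def by auto
  then obtain J where J: "\<forall>i\<in>{1..d}. convex (J i)" and I: "I = {(x, i). i \<in> {1..d} \<and> x \<in> J i}"
    unfolding d_interval_def by auto
  have i: "i \<in> {1..d}" and "a \<in> J i" "b \<in> J i"
    using assms(2,3) A I by auto
  moreover have "is_interval (J i)"
    using J i by (simp add: is_interval_convex_1)
  ultimately have "x \<in> J i"
    using assms(5,6) mem_is_interval_1_I by blast
  then show ?thesis
    using A I i assms(4) by auto
qed

definition leftmost_points :: "(real \<times> nat) set \<Rightarrow> (real \<times> nat) set \<Rightarrow> (real \<times> nat) set" where
  "leftmost_points W A = {(Min {y. (y, i) \<in> A \<inter> W}, i) | i. \<exists>y. (y, i) \<in> A \<inter> W}"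

lemma finite_line_section: "finite W \<Longrightarrow> finite {y. (y, i) \<in> A \<inter> W}"
  by (rule finite_subset[of _ "fst ` W"]) force+

lemma leftmost_points_subset:
  assumes "finite W"
  shows "leftmost_points W A \<subseteq> A \<inter> W"
proof
  fix p assume "p \<in> leftmost_points W A"
  then obtain i where p: "p = (Min {y. (y, i) \<in> A \<inter> W}, i)" and "{y. (y, i) \<in> A \<inter> W} \<noteq> {}"
    unfolding leftmost_points_def by auto
  then have "Min {y. (y, i) \<in> A \<inter> W} \<in> {y. (y, i) \<in> A \<inter> W}"
    using Min_in finite_line_section[OF assms] by blast
  then show "p \<in> A \<inter> W"
    using p by simp
qed

lemma leftmost_pointsI:
  "(x, i) \<in> A \<inter> W \<Longrightarrow> (Min {y. (y, i) \<in> A \<inter> W}, i) \<in> leftmost_points W A"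
  unfolding leftmost_points_def by blast

lemma leftmost_points_le:
  assumes "finite W" "(x, i) \<in> A \<inter> W"
  shows "\<exists>a. (a, i) \<in> leftmost_points W A \<and> a \<le> x"
proof (intro exI conjI)
  show "(Min {y. (y, i) \<in> A \<inter> W}, i) \<in> leftmost_points W A"
    using assms(2) by (rule leftmost_pointsI)
  show "Min {y. (y, i) \<in> A \<inter> W} \<le> x"
    using assms(2) by (intro Min_le finite_line_section assms(1)) simp
qed

lemma card_leftmost_points_le:
  assumes "W \<subseteq> UNIV \<times> {1..d}"
  shows "finite (leftmost_points W A) \<and> card (leftmost_points W A) \<le> d"
proof -
  let ?min = "\<lambda>i. (Min {y. (y, i) \<in> A \<inter> W}, i)"
  have sub: "leftmost_points W A \<subseteq> ?min ` {1..d}"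
  proof
    fix p assume "p \<in> leftmost_points W A"
    then obtain i y where "p = ?min i" "(y, i) \<in> A \<inter> W"
      unfolding leftmost_points_def by blast
    with assms show "p \<in> ?min ` {1..d}"
      by blast
  qed
  then have "card (leftmost_points W A) \<le> card (?min ` {1..d})"
    by (rule card_mono[rotated]) simp
  also have "\<dots> \<le> d"
    using card_image_le[of "{1..d}" ?min] by simp
  finally show ?thesis
    using sub finite_subset by blast
qed

lemma leftmost_point_in_other:
  assumes "A \<in> C_equiv d P" "B \<in> C_equiv d P" "finite W" "(x, i) \<in> A \<inter> B \<inter> W"
  shows "(\<exists>p\<in>leftmost_points W A. p \<in> B) \<or> (\<exists>p\<in>leftmost_points W B. p \<in> A)"
proof -
  obtain a where a: "(a, i) \<in> leftmost_points W A" "a \<le> x"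
    using leftmost_points_le[OF assms(3)] assms(4) by blast
  obtain b where b: "(b, i) \<in> leftmost_points W B" "b \<le> x"
    using leftmost_points_le[OF assms(3)] assms(4) by blast
  have "(a, i) \<in> A" "(b, i) \<in> B"
    using a b leftmost_points_subset[OF assms(3)] by auto
  then have "(a, i) \<in> P" "(b, i) \<in> P"
    using assms(1,2) C_equiv_subset by auto
  show ?thesis
  proof (cases "b \<le> a")
    case True
    then have "(a, i) \<in> B"
      using C_equiv_line_convex[OF assms(2) \<open>(b, i) \<in> B\<close>, of x a] assms(4) a \<open>(a, i) \<in> P\<close> by auto
    then show ?thesis
      using a by blast
  next
    case False
    then have "(b, i) \<in> A"
      using C_equiv_line_convex[OF assms(1) \<open>(a, i) \<in> A\<close>, of x b] assms(4) b \<open>(b, i) \<in> P\<close> by auto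
    then show ?thesis
      using b by blast
  qed
qed

lemma card_UN_UN_le:
  fixes m :: real
  assumes "finite I"
    and "\<And>i. i \<in> I \<Longrightarrow> finite (J i) \<and> card (J i) \<le> k"
    and "\<And>i j. i \<in> I \<Longrightarrow> j \<in> J i \<Longrightarrow> card (S i j) \<le> m"
    and "0 \<le> m"
  shows "card (\<Union>i\<in>I. \<Union>j\<in>J i. S i j) \<le> card I * k * m"
proof -
  have "card (\<Union>i\<in>I. \<Union>j\<in>J i. S i j) \<le> (\<Sum>i\<in>I. card (\<Union>j\<in>J i. S i j))"
    using card_UN_le[OF assms(1)] .
  also have "\<dots> \<le> (\<Sum>i\<in>I. \<Sum>j\<in>J i. card (S i j))"
    using assms(2) by (intro sum_mono card_UN_le) auto
  finally have "card (\<Union>i\<in>I. \<Union>j\<in>J i. S i j) \<le> (\<Sum>i\<in>I. \<Sum>j\<in>J i. real (card (S i j)))"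
    by (simp flip: of_nat_sum)
  also have "\<dots> \<le> (\<Sum>i\<in>I. card (J i) * m)"
    using assms(3) by (intro sum_mono sum_bounded_above) auto
  also have "\<dots> \<le> (\<Sum>i\<in>I. k * m)"
    using assms(2,4) by (intro sum_mono mult_right_mono) auto
  finally show ?thesis
    by simp
qed

lemma card_pairs_le_anchor_degrees:
  fixes anc :: "'a set \<Rightarrow> 'a set" and m1 m2 :: real
  assumes "finite F1" "finite F2"
    and "\<And>A. A \<in> F1 \<union> F2 \<Longrightarrow> finite (anc A) \<and> card (anc A) \<le> k"
    and "\<And>A p. A \<in> F1 \<Longrightarrow> p \<in> anc A \<Longrightarrow> card {B \<in> F2. p \<in> B} \<le> m2"
    and "\<And>B p. B \<in> F2 \<Longrightarrow> p \<in> anc B \<Longrightarrow> card {A \<in> F1. p \<in> A} \<le> m1"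
    and "0 \<le> m1" "0 \<le> m2"
    and T: "\<And>A B. (A, B) \<in> T \<Longrightarrow>
      A \<in> F1 \<and> B \<in> F2 \<and> ((\<exists>p\<in>anc A. p \<in> B) \<or> (\<exists>p\<in>anc B. p \<in> A))"
  shows "card T \<le> card F1 * k * m2 + card F2 * k * m1"
proof -
  define U1 where "U1 = (\<Union>A\<in>F1. \<Union>p\<in>anc A. {A} \<times> {B \<in> F2. p \<in> B})"
  define U2 where "U2 = (\<Union>B\<in>F2. \<Union>p\<in>anc B. {A \<in> F1. p \<in> A} \<times> {B})"
  have "T \<subseteq> U1 \<union> U2"
    using T unfolding U1_def U2_def by fast
  moreover have "U1 \<union> U2 \<subseteq> F1 \<times> F2"
    unfolding U1_def U2_def by blast
  ultimately have "card T \<le> card U1 + card U2"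
    using assms(1,2) by (meson card_Un_le card_mono finite_SigmaI finite_subset le_trans)
  moreover have "card U1 \<le> card F1 * k * m2"
    unfolding U1_def using assms by (intro card_UN_UN_le) (auto simp: card_cartesian_product)
  moreover have "card U2 \<le> card F2 * k * m1"
    unfolding U2_def using assms by (intro card_UN_UN_le) (auto simp: card_cartesian_product)
  ultimately show ?thesis
    by linarith
qed

lemma finite_transversal:
  assumes "finite I" "\<And>i. i \<in> I \<Longrightarrow> X i \<noteq> {}"
  shows "\<exists>W. finite W \<and> W \<subseteq> (\<Union>i\<in>I. X i) \<and> (\<forall>i\<in>I. X i \<inter> W \<noteq> {})"
proof (intro exI conjI)
  let ?W = "(\<lambda>i. SOME x. x \<in> X i) ` I"
  have some_mem: "(SOME x. x \<in> X i) \<in> X i" if "i \<in> I" for i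
    using assms(2)[OF that] by (metis ex_in_conv someI_ex)
  show "finite ?W"
    using assms(1) by simp
  show "?W \<subseteq> (\<Union>i\<in>I. X i)" "\<forall>i\<in>I. X i \<inter> ?W \<noteq> {}"
    using some_mem by blast+
qed

lemma card_PiE_two:
  "card {f \<in> PiE {1..2::nat} F. R (f 1) (f 2)} = card {(A, B) \<in> F 1 \<times> F 2. R A B}"
  (is "card ?S = card ?T")
proof (rule bij_betw_same_card[of "\<lambda>f. (f 1, f 2)"], rule bij_betw_imageI)
  have two: "{1..2::nat} = {1, 2}"
    by auto
  show "inj_on (\<lambda>f. (f 1, f 2)) ?S"
    unfolding two by (rule inj_onI) (auto intro: PiE_ext)
  have "(A, B) \<in> (\<lambda>f. (f 1, f 2)) ` ?S" if "(A, B) \<in> ?T" for A B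
  proof (rule rev_image_eqI)
    show "(\<lambda>j. if j = 1 then A else if j = 2 then B else undefined) \<in> ?S"
      using that unfolding two by (auto simp: PiE_iff extensional_def)
  qed simp
  then show "(\<lambda>f. (f 1, f 2)) ` ?S = ?T"
    unfolding two by auto
qed

lemma C_equiv_card_intersecting_pairs_le:
  fixes c :: real
  assumes P: "P \<subseteq> UNIV \<times> {1..d}"
    and F: "finite F1" "finite F2" "F1 \<subseteq> C_equiv d P" "F2 \<subseteq> C_equiv d P"
    and "0 \<le> c"
    and depth1: "\<And>p. p \<in> P \<Longrightarrow> card {A \<in> F1. p \<in> A} \<le> c * card F1"
    and depth2: "\<And>p. p \<in> P \<Longrightarrow> card {B \<in> F2. p \<in> B} \<le> c * card F2"
  shows "card {(A, B) \<in> F1 \<times> F2. P \<inter> A \<inter> B \<noteq> {}} \<le> 2 * real d * c * card F1 * card F2"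
proof -
  define T where "T = {(A, B) \<in> F1 \<times> F2. P \<inter> A \<inter> B \<noteq> {}}"
  have "finite T"
    using F(1,2) by (rule finite_subset[rotated, OF finite_SigmaI]) (auto simp: T_def)
  moreover have "P \<inter> fst t \<inter> snd t \<noteq> {}" if "t \<in> T" for t
    using that unfolding T_def by auto
  ultimately have "\<exists>W. finite W \<and> W \<subseteq> (\<Union>t\<in>T. P \<inter> fst t \<inter> snd t) \<and>
      (\<forall>t\<in>T. P \<inter> fst t \<inter> snd t \<inter> W \<noteq> {})"
    by (rule finite_transversal)
  then obtain W where W: "finite W" "W \<subseteq> P" and hit: "\<forall>t\<in>T. P \<inter> fst t \<inter> snd t \<inter> W \<noteq> {}"
    by blast
  have "card T \<le> card F1 * d * (c * card F2) + card F2 * d * (c * card F1)"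
  proof (rule card_pairs_le_anchor_degrees[where anc = "leftmost_points W"])
    show "finite (leftmost_points W A) \<and> card (leftmost_points W A) \<le> d" for A
      using W(2) P by (intro card_leftmost_points_le) blast
    show "card {B \<in> F2. p \<in> B} \<le> c * card F2" "card {B \<in> F1. p \<in> B} \<le> c * card F1"
      if "p \<in> leftmost_points W A" for A p
      using that leftmost_points_subset[OF W(1)] W(2) by (intro depth1 depth2; blast)+
    show "A \<in> F1 \<and> B \<in> F2 \<and>
      ((\<exists>p\<in>leftmost_points W A. p \<in> B) \<or> (\<exists>p\<in>leftmost_points W B. p \<in> A))"
      if AB: "(A, B) \<in> T" for A B
    proof -
      obtain x i where "(x, i) \<in> A \<inter> B \<inter> W"
        using bspec[OF hit AB] by auto
      moreover have "A \<in> F1" "B \<in> F2"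
        using AB unfolding T_def by auto
      ultimately show ?thesis
        using leftmost_point_in_other[OF _ _ W(1)] F(3,4) by blast
    qed
  qed (use F(1,2) \<open>0 \<le> c\<close> in auto)
  also have "\<dots> = 2 * real d * c * card F1 * card F2"
    by (simp add: algebra_simps)
  finally show ?thesis
    unfolding T_def .
qed

theorem lemma3:
  fixes d :: nat and P :: "(real \<times> nat) set"
  assumes "d \<ge> 1" and "P \<subseteq> UNIV \<times> {1..d}"
  shows "colorful_fractional_helly P (C_equiv d P) 2"
  unfolding colorful_fractional_helly_def
proof (intro exI[of _ "\<lambda>\<alpha>. \<alpha> / (4 * real d)"] conjI allI impI)
  show "0 < \<alpha> / (4 * real d)" "\<alpha> / (4 * real d) < 1" if "0 < \<alpha> \<and> \<alpha> < 1" for \<alpha> :: real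
    using that assms(1) by (auto simp: field_simps)
  fix \<alpha> :: real and F :: "nat \<Rightarrow> (real \<times> nat) set set"
  assume H: "0 < \<alpha> \<and> \<alpha> < 1 \<and>
           (\<forall>i\<in>{1..2}. finite (F i) \<and> F i \<noteq> {} \<and> F i \<subseteq> C_equiv d P) \<and>
           real (card {f \<in> PiE {1..2} F. P \<inter> \<Inter>(f ` {1..2}) \<noteq> {}})
             \<ge> \<alpha> * (\<Prod>i\<in>{1..2}. real (card (F i)))"
  have two: "{1..2::nat} = {1, 2}"
    by auto
  have F: "finite (F 1)" "finite (F 2)" "F 1 \<subseteq> C_equiv d P" "F 2 \<subseteq> C_equiv d P"
    and "card (F 1) > 0" "card (F 2) > 0"
    using H unfolding two by (auto simp: card_gt_0_iff)
  have "2 * real d * (\<alpha> / (4 * real d)) * card (F 1) * card (F 2) < \<alpha> * card (F 1) * card (F 2)"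
    using H assms(1) \<open>card (F 1) > 0\<close> \<open>card (F 2) > 0\<close> by (simp add: field_simps)
  also have "\<dots> \<le> card {(A, B) \<in> F 1 \<times> F 2. P \<inter> A \<inter> B \<noteq> {}}"
    using H card_PiE_two[of F "\<lambda>A B. P \<inter> A \<inter> B \<noteq> {}"] unfolding two by (simp add: Int_assoc)
  finally have many: "2 * real d * (\<alpha> / (4 * real d)) * card (F 1) * card (F 2)
      < card {(A, B) \<in> F 1 \<times> F 2. P \<inter> A \<inter> B \<noteq> {}}" .
  have "\<exists>i\<in>{1, 2}. \<exists>p\<in>P. \<alpha> / (4 * real d) * card (F i) \<le> card {A \<in> F i. p \<in> A}"
  proof (rule ccontr)
    assume "\<not> ?thesis"
    then have "card {(A, B) \<in> F 1 \<times> F 2. P \<inter> A \<inter> B \<noteq> {}}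
        \<le> 2 * real d * (\<alpha> / (4 * real d)) * card (F 1) * card (F 2)"
      using H by (intro C_equiv_card_intersecting_pairs_le[OF assms(2) F]) (auto simp: not_le)
    with many show False
      by linarith
  qed
  then obtain i p where "i \<in> {1, 2}" "p \<in> P"
    and "\<alpha> / (4 * real d) * card (F i) \<le> card {A \<in> F i. p \<in> A}"
    by blast
  then show "\<exists>i\<in>{1..2}. \<exists>G\<subseteq>F i.
      \<alpha> / (4 * real d) * real (card (F i)) \<le> real (card G) \<and> P \<inter> \<Inter>G \<noteq> {}"
    unfolding two by (intro bexI[of _ i] exI[of _ "{A \<in> F i. p \<in> A}"]) auto
qed

end
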